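(* Let $p\colon X\to B$ be a Boolean set. For $e,f\in B$ let $e\setminus f$ denote the relative complement of $e\wedge f$ in the interval $[0,e]$. For $x,y\in X$ define $$x\circ y=y|^{p(y)}_{p(x)\wedge p(y)},\qquad y\setminus x=y|^{p(y)}_{p(y)\setminus p(x)},\qquad x\bullet y=x\vee(y\setminus x)$$ (the join being taken in $(X,\le)$; it exists). Then $(X,\circ,\bullet)$ is a right-hand skew Boolean algebra.
   Context: Convention: a "Boolean algebra" means a generalized Boolean algebra (relatively complemented distributive lattice with $0$, top not required). Presheaf of sets over a meet semilattice $E$: pairwise disjoint sets $X_e$ ($e\in E$), restriction maps $x\mapsto x|^e_f$, $X_e\to X_f$ for $e\ge f$, with $|^e_e=\mathrm{id}$ and $(x|^e_f)|^f_g=x|^e_g$; $X=\bigcup X_e$, $p(x)=e$ iff $x\in X_e$; global support means all $X_e\ne\emptyset$. Order: $x\le y$ iff $p(x)\le p(y)$ and $x=y|^{p(y)}_{p(x)}$. Compatibility: $x\sim y$ iff $x\wedge y$ exists in $(X,\le)$ and $p(x\wedge y)=p(x)\wedge p(y)$. A Boolean set is a presheaf of sets $p\colon X\to B$ with global support over a Boolean algebra $B$ such that $(X,\le)$ has a least element $0$, every compatible pair has a join in $(X,\le)$, and $p(x)=0$ implies $x=0$. A right-hand skew Boolean algebra is $(B,\circ,\bullet)$ where $(B,\circ)$, $(B,\bullet)$ are bands such that: (SB1) $x\circ(x\bullet y)=x=(y\bullet x)\circ x$ and $x\bullet(x\circ y)=x=(y\circ x)\bullet x$; (SB2) $x\circ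 y\circ x=y\circ x$ and $x\bullet y\bullet x=x\bullet y$; (SB3) $x\bullet y=y\bullet x$ iff $x\circ y=y\circ x$; (SB4) there is $0$ with $0\circ x=0=x\circ 0$; (SB5) each $x^{\downarrow}=\{x\circ s\circ x:s\in B\}$ is a Boolean algebra with top element. *)

theory Defs
  imports Main
begin

unbundle lattice_syntax

text \<open>A generalized Boolean algebra is a relatively complemented distributive lattice
  with 0. We take the carrier to be a type of class distrib_lattice and
  bounded_lattice_bot, and require relative complements in every interval [0,e]
  (equivalent, in a distributive lattice with 0, to relative complementedness).\<close>

definition gen_boolean_algebra :: "'b::{distrib_lattice,bounded_lattice_bot} itself \<Rightarrow> bool" where
  "gen_boolean_algebra _ \<longleftrightarrow>
     (\<forall>e f :: 'b. f \<le> e \<longrightarrow> (\<exists>g. f \<sqinter> g = bot \<and> f \<squnion> g = e))"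

definition rdiff :: "'b::{distrib_lattice,bounded_lattice_bot} \<Rightarrow> 'b \<Rightarrow> 'b" where
  "rdiff e f = (THE g. (e \<sqinter> f) \<sqinter> g = bot \<and> (e \<sqinter> f) \<squnion> g = e)"

text \<open>The total set X is the type 'x, p x is the support of x, and
  res x f stands for x|^{p x}_f (only meaningful for f \<le> p x).
  Disjointness of the fibres X_e is automatic since p is a function.\<close>

definition presheaf :: "('x \<Rightarrow> 'b::semilattice_inf) \<Rightarrow> ('x \<Rightarrow> 'b \<Rightarrow> 'x) \<Rightarrow> bool" where
  "presheaf p res \<longleftrightarrow>
     (\<forall>x f. f \<le> p x \<longrightarrow> p (res x f) = f) \<and>
     (\<forall>x. res x (p x) = x) \<and>
     (\<forall>x f g. g \<le> f \<and> f \<le> p x \<longrightarrow> res (res x f) g = res x g)"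

definition psle :: "('x \<Rightarrow> 'b::semilattice_inf) \<Rightarrow> ('x \<Rightarrow> 'b \<Rightarrow> 'x) \<Rightarrow> 'x \<Rightarrow> 'x \<Rightarrow> bool" where
  "psle p res x y \<longleftrightarrow> p x \<le> p y \<and> x = res y (p x)"

definition is_glb_ps :: "('x \<Rightarrow> 'b::semilattice_inf) \<Rightarrow> ('x \<Rightarrow> 'b \<Rightarrow> 'x) \<Rightarrow> 'x \<Rightarrow> 'x \<Rightarrow> 'x \<Rightarrow> bool" where
  "is_glb_ps p res x y z \<longleftrightarrow> psle p res z x \<and> psle p res z y \<and>
     (\<forall>w. psle p res w x \<and> psle p res w y \<longrightarrow> psle p res w z)"

definition is_lub_ps :: "('x \<Rightarrow> 'b::semilattice_inf) \<Rightarrow> ('x \<Rightarrow> 'b \<Rightarrow> 'x) \<Rightarrow> 'x \<Rightarrow> 'x \<Rightarrow> 'x \<Rightarrow> bool" where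
  "is_lub_ps p res x y z \<longleftrightarrow> psle p res x z \<and> psle p res y z \<and>
     (\<forall>w. psle p res x w \<and> psle p res y w \<longrightarrow> psle p res z w)"

definition compat :: "('x \<Rightarrow> 'b::semilattice_inf) \<Rightarrow> ('x \<Rightarrow> 'b \<Rightarrow> 'x) \<Rightarrow> 'x \<Rightarrow> 'x \<Rightarrow> bool" where
  "compat p res x y \<longleftrightarrow> (\<exists>z. is_glb_ps p res x y z \<and> p z = p x \<sqinter> p y)"

definition boolean_set ::
  "('x \<Rightarrow> 'b::{distrib_lattice,bounded_lattice_bot}) \<Rightarrow> ('x \<Rightarrow> 'b \<Rightarrow> 'x) \<Rightarrow> bool" where
  "boolean_set p res \<longleftrightarrow>
     gen_boolean_algebra TYPE('b) \<and>
     presheaf p res \<and>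
     surj p \<and>
     (\<exists>z. \<forall>x. psle p res z x) \<and>
     (\<forall>x y. compat p res x y \<longrightarrow> (\<exists>z. is_lub_ps p res x y z)) \<and>
     (\<forall>x. p x = bot \<longrightarrow> (\<forall>y. psle p res x y))"

definition bs_circ :: "('x \<Rightarrow> 'b::{distrib_lattice,bounded_lattice_bot}) \<Rightarrow> ('x \<Rightarrow> 'b \<Rightarrow> 'x) \<Rightarrow> 'x \<Rightarrow> 'x \<Rightarrow> 'x" where
  "bs_circ p res x y = res y (p x \<sqinter> p y)"

definition bs_minus :: "('x \<Rightarrow> 'b::{distrib_lattice,bounded_lattice_bot}) \<Rightarrow> ('x \<Rightarrow> 'b \<Rightarrow> 'x) \<Rightarrow> 'x \<Rightarrow> 'x \<Rightarrow> 'x" where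
  "bs_minus p res y x = res y (rdiff (p y) (p x))"

definition bs_bullet :: "('x \<Rightarrow> 'b::{distrib_lattice,bounded_lattice_bot}) \<Rightarrow> ('x \<Rightarrow> 'b \<Rightarrow> 'x) \<Rightarrow> 'x \<Rightarrow> 'x \<Rightarrow> 'x" where
  "bs_bullet p res x y = (THE z. is_lub_ps p res x (bs_minus p res y x) z)"

definition band :: "('a \<Rightarrow> 'a \<Rightarrow> 'a) \<Rightarrow> bool" where
  "band m \<longleftrightarrow> (\<forall>x y z. m (m x y) z = m x (m y z)) \<and> (\<forall>x. m x x = x)"

definition boolean_algebra_on :: "'a set \<Rightarrow> ('a \<Rightarrow> 'a \<Rightarrow> 'a) \<Rightarrow> ('a \<Rightarrow> 'a \<Rightarrow> 'a) \<Rightarrow> bool" where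
  "boolean_algebra_on S m j \<longleftrightarrow>
     (\<forall>a\<in>S. \<forall>b\<in>S. m a b \<in> S \<and> j a b \<in> S) \<and>
     (\<forall>a\<in>S. \<forall>b\<in>S. m a b = m b a \<and> j a b = j b a) \<and>
     (\<forall>a\<in>S. \<forall>b\<in>S. \<forall>c\<in>S. m (m a b) c = m a (m b c) \<and> j (j a b) c = j a (j b c)) \<and>
     (\<forall>a\<in>S. m a a = a \<and> j a a = a) \<and>
     (\<forall>a\<in>S. \<forall>b\<in>S. m a (j a b) = a \<and> j a (m a b) = a) \<and>
     (\<forall>a\<in>S. \<forall>b\<in>S. \<forall>c\<in>S. m a (j b c) = j (m a b) (m a c)) \<and>
     (\<exists>z\<in>S. \<exists>t\<in>S. (\<forall>a\<in>S. m z a = z \<and> m t a = a) \<and>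
        (\<forall>a\<in>S. \<exists>c\<in>S. m a c = z \<and> j a c = t))"

definition rh_skew_boolean_algebra :: "('a \<Rightarrow> 'a \<Rightarrow> 'a) \<Rightarrow> ('a \<Rightarrow> 'a \<Rightarrow> 'a) \<Rightarrow> bool" where
  "rh_skew_boolean_algebra c b \<longleftrightarrow>
     band c \<and> band b \<and>
     (\<forall>x y. c x (b x y) = x \<and> c (b y x) x = x \<and> b x (c x y) = x \<and> b (c y x) x = x) \<and>
     (\<forall>x y. c (c x y) x = c y x \<and> b (b x y) x = b x y) \<and>
     (\<forall>x y. b x y = b y x \<longleftrightarrow> c x y = c y x) \<and>
     (\<exists>z. \<forall>x. c z x = z \<and> c x z = z) \<and>
     (\<forall>x. boolean_algebra_on {c (c x s) x | s. True} c b)"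

end

theory Submission
  imports Defs
begin

text \<open>A section of a Boolean set is determined by its restrictions to the two parts of any
  decomposition \<open>e \<squnion> f\<close> of its support, being their join. So \<open>x \<bullet> y\<close> is the unique section over
  \<open>p x \<squnion> p y\<close> restricting to \<open>x\<close> on \<open>p x\<close> and to \<open>y\<close> on \<open>p y \<setminus> p x\<close>, and each skew Boolean
  algebra axiom reduces to comparing restrictions on such parts. The corner of \<open>x\<close> is the image
  of the interval \<open>[0, p x]\<close> under \<open>e \<mapsto> x|\<^sub>e\<close>, which carries \<open>\<sqinter>\<close>, \<open>\<squnion>\<close> to \<open>\<circ>\<close>, \<open>\<bullet>\<close>.\<close>

lemma disjoint_le_supD:
  fixes d :: "'c::{distrib_lattice,bounded_lattice_bot}"
  assumes "d \<le> a \<squnion> b" "d \<sqinter> a = bot"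
  shows "d \<le> b"
proof (rule inf.orderI)
  have "d = d \<sqinter> (a \<squnion> b)" using assms(1) by (simp add: inf.absorb1)
  also have "\<dots> = d \<sqinter> b" using assms(2) by (simp add: inf_sup_distrib1)
  finally show "d = d \<sqinter> b" .
qed

lemma disjoint_mono:
  fixes d :: "'c::{lattice,order_bot}"
  assumes "d \<le> c" "c \<sqinter> a = bot"
  shows "d \<sqinter> a = bot"
  using inf_mono[OF assms(1) order_refl[of a]] assms(2) by (simp add: bot_unique)

lemma relative_complement_unique:
  fixes a :: "'c::{distrib_lattice,bounded_lattice_bot}"
  assumes "a \<sqinter> g = bot" "a \<squnion> g = e" "a \<sqinter> h = bot" "a \<squnion> h = e"
  shows "g = h"
proof -
  have le: "g' \<le> h'" if "a \<sqinter> g' = bot" "a \<squnion> g' = e" "a \<squnion> h' = e" for g' h'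
  proof (rule disjoint_le_supD)
    show "g' \<le> a \<squnion> h'" using that sup_ge2[of g' a] by simp
    show "g' \<sqinter> a = bot" using that(1) by (simp add: inf_commute)
  qed
  from le[OF assms(1,2,4)] le[OF assms(3,4,2)] show ?thesis by (rule antisym)
qed

context
  assumes gba: "gen_boolean_algebra TYPE('b::{distrib_lattice,bounded_lattice_bot})"
begin

lemma rdiff_complement:
  fixes e f :: 'b
  shows "e \<sqinter> f \<sqinter> rdiff e f = bot \<and> e \<sqinter> f \<squnion> rdiff e f = e"
proof -
  obtain g :: 'b where g: "e \<sqinter> f \<sqinter> g = bot" "e \<sqinter> f \<squnion> g = e"
    using gba inf_le1 unfolding gen_boolean_algebra_def by blast
  then have "rdiff e f = g"
    unfolding rdiff_def by (blast intro: relative_complement_unique)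
  with g show ?thesis by simp
qed

lemma inf_sup_rdiff: "(e::'b) \<sqinter> f \<squnion> rdiff e f = e"
  using rdiff_complement by blast

lemma rdiff_le: "rdiff (e::'b) f \<le> e"
  using sup_ge2[of "rdiff e f" "e \<sqinter> f"] by (simp only: inf_sup_rdiff)

lemma rdiff_inf_eq_bot: "rdiff (e::'b) f \<sqinter> f = bot"
proof -
  have "rdiff e f \<sqinter> f = rdiff e f \<sqinter> e \<sqinter> f"
    using rdiff_le by (simp add: inf.absorb1)
  also have "\<dots> = e \<sqinter> f \<sqinter> rdiff e f"
    by (simp add: ac_simps)
  finally show ?thesis using rdiff_complement by simp
qed

lemma inf_rdiff_eq_bot: "(f::'b) \<sqinter> rdiff e f = bot"
  using rdiff_inf_eq_bot by (simp add: inf_commute)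

lemma sup_rdiff: "(a::'b) \<squnion> rdiff b a = a \<squnion> b"
proof (rule antisym)
  show "a \<squnion> rdiff b a \<le> a \<squnion> b"
    using rdiff_le by (rule sup_mono[OF order_refl])
  have "b = b \<sqinter> a \<squnion> rdiff b a" by (rule inf_sup_rdiff[symmetric])
  also have "\<dots> \<le> a \<squnion> rdiff b a" by (rule sup_mono) simp_all
  finally show "a \<squnion> b \<le> a \<squnion> rdiff b a" by simp
qed

lemma le_rdiffI:
  assumes "(e::'b) \<le> b" "e \<sqinter> a = bot"
  shows "e \<le> rdiff b a"
proof (rule disjoint_le_supD)
  show "e \<le> b \<sqinter> a \<squnion> rdiff b a" using assms(1) by (simp only: inf_sup_rdiff)
  show "e \<sqinter> (b \<sqinter> a) = bot" using assms(2) by (simp add: inf_left_commute)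
qed

lemma rdiff_eq_bot: "(b::'b) \<le> a \<Longrightarrow> rdiff b a = bot"
  using rdiff_inf_eq_bot[of b a] order_trans[OF rdiff_le] by (simp add: inf.absorb1)

end

lemma boolean_algebra_on_image_interval:
  fixes t :: "'c::{distrib_lattice,bounded_lattice_bot}"
  assumes meet: "\<And>e f. e \<le> t \<Longrightarrow> f \<le> t \<Longrightarrow> m (\<phi> e) (\<phi> f) = \<phi> (e \<sqinter> f)"
    and join: "\<And>e f. e \<le> t \<Longrightarrow> f \<le> t \<Longrightarrow> j (\<phi> e) (\<phi> f) = \<phi> (e \<squnion> f)"
    and complemented: "\<And>e. e \<le> t \<Longrightarrow> \<exists>g\<le>t. e \<sqinter> g = bot \<and> e \<squnion> g = t"
  shows "boolean_algebra_on (\<phi> ` {e. e \<le> t}) m j"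
proof -
  let ?S = "\<phi> ` {e. e \<le> t}"
  have complements: "\<forall>a\<in>?S. \<exists>c\<in>?S. m a c = \<phi> bot \<and> j a c = \<phi> t"
  proof
    fix a assume "a \<in> ?S"
    then obtain e where e: "e \<le> t" "a = \<phi> e" by blast
    with complemented obtain g where "g \<le> t" "e \<sqinter> g = bot" "e \<squnion> g = t" by blast
    with e show "\<exists>c\<in>?S. m a c = \<phi> bot \<and> j a c = \<phi> t"
      by (auto simp: meet join intro!: bexI[of _ "\<phi> g"])
  qed
  have "\<phi> bot \<in> ?S" "\<phi> t \<in> ?S" by auto
  moreover have "\<forall>a\<in>?S. m (\<phi> bot) a = \<phi> bot \<and> m (\<phi> t) a = a"
    by (auto simp: meet inf_absorb2)
  ultimately have bounded_complemented:
    "\<exists>z\<in>?S. \<exists>u\<in>?S. (\<forall>a\<in>?S. m z a = z \<and> m u a = a) \<and> (\<forall>a\<in>?S. \<exists>c\<in>?S. m a c = z \<and> j a c = u)"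
    using complements by blast
  show ?thesis
    unfolding boolean_algebra_on_def
  proof (intro conjI)
    show "\<forall>a\<in>?S. \<forall>b\<in>?S. m a b \<in> ?S \<and> j a b \<in> ?S"
      by (auto simp: meet join intro!: imageI le_infI1)
    show "\<forall>a\<in>?S. \<forall>b\<in>?S. m a b = m b a \<and> j a b = j b a"
      by (auto simp: meet join inf_commute sup_commute)
    show "\<forall>a\<in>?S. \<forall>b\<in>?S. \<forall>c\<in>?S. m (m a b) c = m a (m b c) \<and> j (j a b) c = j a (j b c)"
      by (auto simp: meet join inf_assoc sup_assoc le_infI1)
    show "\<forall>a\<in>?S. m a a = a \<and> j a a = a"
      by (auto simp: meet join)
    show "\<forall>a\<in>?S. \<forall>b\<in>?S. m a (j a b) = a \<and> j a (m a b) = a"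
      by (auto simp: meet join le_infI1)
    show "\<forall>a\<in>?S. \<forall>b\<in>?S. \<forall>c\<in>?S. m a (j b c) = j (m a b) (m a c)"
      by (auto simp: meet join le_infI1 inf_sup_distrib1)
  qed (rule bounded_complemented)
qed

locale boolean_presheaf =
  fixes p :: "'x \<Rightarrow> 'b::{distrib_lattice,bounded_lattice_bot}"
    and res :: "'x \<Rightarrow> 'b \<Rightarrow> 'x"
  assumes boolean_set: "boolean_set p res"
begin

abbreviation le_ps :: "'x \<Rightarrow> 'x \<Rightarrow> bool" (infix "\<preceq>" 50)
  where "x \<preceq> y \<equiv> psle p res x y"

abbreviation circ :: "'x \<Rightarrow> 'x \<Rightarrow> 'x" (infixl "\<odot>" 70)
  where "x \<odot> y \<equiv> bs_circ p res x y"

abbreviation bullet :: "'x \<Rightarrow> 'x \<Rightarrow> 'x" (infixl "\<bullet>" 65)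
  where "x \<bullet> y \<equiv> bs_bullet p res x y"

lemma gba: "gen_boolean_algebra TYPE('b)"
  and presheaf: "presheaf p res"
  and surj_p: "surj p"
  and compat_has_lub: "compat p res x y \<Longrightarrow> \<exists>z. is_lub_ps p res x y z"
  and psle_if_p_eq_bot: "p x = bot \<Longrightarrow> x \<preceq> y"
  using boolean_set by (simp_all add: boolean_set_def)

lemma p_res: "f \<le> p x \<Longrightarrow> p (res x f) = f"
  and res_p [simp]: "res x (p x) = x"
  and res_res: "g \<le> f \<Longrightarrow> f \<le> p x \<Longrightarrow> res (res x f) g = res x g"
  using presheaf by (simp_all add: presheaf_def)

lemma psle_antisym: "x \<preceq> y \<Longrightarrow> y \<preceq> x \<Longrightarrow> x = y"
  unfolding psle_def by (metis res_p order_antisym)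

lemma res_psle: "f \<le> p x \<Longrightarrow> res x f \<preceq> x"
  unfolding psle_def by (simp add: p_res)

lemma eq_if_p_eq_bot: "p x = bot \<Longrightarrow> p y = bot \<Longrightarrow> x = y"
  using psle_if_p_eq_bot psle_antisym by blast

lemma res_bot: "res x bot = res y bot"
  by (rule eq_if_p_eq_bot) (simp_all add: p_res)

lemma compatI:
  assumes "res x (p x \<sqinter> p y) = res y (p x \<sqinter> p y)"
  shows "compat p res x y"
  unfolding compat_def is_glb_ps_def
proof (intro exI conjI allI impI)
  let ?m = "res x (p x \<sqinter> p y)"
  show "?m \<preceq> x" by (rule res_psle) simp
  show "?m \<preceq> y" unfolding assms by (rule res_psle) simp
  show "p ?m = p x \<sqinter> p y" by (simp add: p_res)
  fix w assume "w \<preceq> x \<and> w \<preceq> y"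
  then show "w \<preceq> ?m"
    unfolding psle_def by (simp add: p_res res_res)
qed

lemma p_lub:
  assumes "is_lub_ps p res x y z"
  shows "p z = p x \<squnion> p y"
proof (rule antisym)
  have "x \<preceq> z" "y \<preceq> z" using assms unfolding is_lub_ps_def by auto
  then have le: "p x \<squnion> p y \<le> p z" unfolding psle_def by simp
  let ?z = "res z (p x \<squnion> p y)"
  have "x \<preceq> ?z" "y \<preceq> ?z"
    using \<open>x \<preceq> z\<close> \<open>y \<preceq> z\<close> le unfolding psle_def by (simp_all add: p_res res_res)
  then have "z \<preceq> ?z" using assms unfolding is_lub_ps_def by blast
  then show "p z \<le> p x \<squnion> p y" using le unfolding psle_def by (simp add: p_res)
  show "p x \<squnion> p y \<le> p z" by (rule le)
qed

lemma lub_eqI: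
  assumes "is_lub_ps p res x y u" "x \<preceq> z" "y \<preceq> z" "p z = p x \<squnion> p y"
  shows "u = z"
proof -
  have "u \<preceq> z" using assms unfolding is_lub_ps_def by blast
  with p_lub[OF assms(1)] assms(4) have "u = res z (p z)" unfolding psle_def by simp
  then show ?thesis by simp
qed

lemma eq_if_res_eq_on_cover:
  assumes "p z = e1 \<squnion> e2" "p w = e1 \<squnion> e2" "res z e1 = res w e1" "res z e2 = res w e2"
  shows "z = w"
proof -
  let ?a = "res z e1" and ?b = "res z e2"
  have le: "e1 \<le> p z" "e2 \<le> p z" "e1 \<le> p w" "e2 \<le> p w" using assms by auto
  have "res ?a (p ?a \<sqinter> p ?b) = res ?b (p ?a \<sqinter> p ?b)"
    using le by (simp add: p_res res_res)
  then obtain u where u: "is_lub_ps p res ?a ?b u"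
    using compat_has_lub[OF compatI] by blast
  have "u = z"
  proof (rule lub_eqI[OF u])
    show "?a \<preceq> z" by (rule res_psle[OF le(1)])
    show "?b \<preceq> z" by (rule res_psle[OF le(2)])
    show "p z = p ?a \<squnion> p ?b" using le(1,2) assms(1) by (simp add: p_res)
  qed
  moreover have "u = w"
  proof (rule lub_eqI[OF u])
    show "?a \<preceq> w" unfolding assms(3) by (rule res_psle[OF le(3)])
    show "?b \<preceq> w" unfolding assms(4) by (rule res_psle[OF le(4)])
    show "p w = p ?a \<squnion> p ?b" using le(1,2) assms(2) by (simp add: p_res)
  qed
  ultimately show ?thesis by simp
qed

lemma p_circ: "p (x \<odot> y) = p x \<sqinter> p y"
  by (simp add: bs_circ_def p_res)

lemma circ_eq_res: "x \<odot> y = res y (p x \<sqinter> p y)"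
  by (simp add: bs_circ_def)

lemma bullet_is_lub: "is_lub_ps p res x (bs_minus p res y x) (x \<bullet> y)"
proof -
  let ?u = "bs_minus p res y x"
  have "p ?u = rdiff (p y) (p x)"
    by (simp add: bs_minus_def p_res rdiff_le[OF gba])
  then have "compat p res x ?u"
    by (intro compatI) (simp add: inf_rdiff_eq_bot[OF gba] res_bot)
  then obtain z where z: "is_lub_ps p res x ?u z"
    using compat_has_lub by blast
  moreover have "z' = z" if "is_lub_ps p res x ?u z'" for z'
    using that z unfolding is_lub_ps_def by (blast intro: psle_antisym)
  ultimately show ?thesis
    unfolding bs_bullet_def by (rule theI)
qed

lemma p_bullet: "p (x \<bullet> y) = p x \<squnion> p y"
  using p_lub[OF bullet_is_lub]
  by (simp add: bs_minus_def p_res rdiff_le[OF gba] sup_rdiff[OF gba])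

lemma res_bullet_left: "e \<le> p x \<Longrightarrow> res (x \<bullet> y) e = res x e"
proof -
  assume "e \<le> p x"
  have "x \<preceq> x \<bullet> y" using bullet_is_lub unfolding is_lub_ps_def by blast
  then have "res (x \<bullet> y) (p x) = x" unfolding psle_def by simp
  with \<open>e \<le> p x\<close> show ?thesis
    by (metis p_bullet res_res sup_ge1)
qed

lemma res_bullet_rdiff: "res (x \<bullet> y) (rdiff (p y) (p x)) = res y (rdiff (p y) (p x))"
proof -
  have "bs_minus p res y x \<preceq> x \<bullet> y" using bullet_is_lub unfolding is_lub_ps_def by blast
  then show ?thesis
    unfolding psle_def bs_minus_def by (simp add: p_res rdiff_le[OF gba])
qed

lemma res_bullet_right:
  assumes "e \<le> p y" "e \<sqinter> p x = bot"
  shows "res (x \<bullet> y) e = res y e"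
proof -
  have e: "e \<le> rdiff (p y) (p x)" using le_rdiffI[OF gba assms] .
  have d: "rdiff (p y) (p x) \<le> p (x \<bullet> y)"
    using rdiff_le[OF gba] by (simp add: p_bullet le_supI2)
  have "res (x \<bullet> y) e = res (res (x \<bullet> y) (rdiff (p y) (p x))) e"
    using res_res[OF e d] by simp
  also have "\<dots> = res y e"
    unfolding res_bullet_rdiff using res_res[OF e rdiff_le[OF gba]] .
  finally show ?thesis .
qed

lemma bullet_eqI:
  assumes "p z = p x \<squnion> p y" "res z (p x) = x"
    and "res z (rdiff (p y) (p x)) = res y (rdiff (p y) (p x))"
  shows "x \<bullet> y = z"
proof (rule eq_if_res_eq_on_cover)
  show "p (x \<bullet> y) = p x \<squnion> rdiff (p y) (p x)" "p z = p x \<squnion> rdiff (p y) (p x)"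
    using assms(1) by (simp_all add: p_bullet sup_rdiff[OF gba])
  show "res (x \<bullet> y) (p x) = res z (p x)"
    using assms(2) by (simp add: res_bullet_left)
  show "res (x \<bullet> y) (rdiff (p y) (p x)) = res z (rdiff (p y) (p x))"
    using assms(3) by (simp add: res_bullet_rdiff)
qed

lemma bullet_absorb: "p y \<le> p x \<Longrightarrow> x \<bullet> y = x"
  by (rule bullet_eqI) (simp_all add: sup_absorb1 rdiff_eq_bot[OF gba] res_bot)

lemma bullet_psle: "x \<preceq> y \<Longrightarrow> x \<bullet> y = y"
  by (rule bullet_eqI) (simp_all add: psle_def sup_absorb2)

lemma band_circ: "band (\<odot>)"
  unfolding band_def
proof (intro conjI allI)
  fix x y z
  have "x \<odot> (y \<odot> z) = res (y \<odot> z) (p x \<sqinter> (p y \<sqinter> p z))"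
    unfolding circ_eq_res[of x] p_circ ..
  also have "\<dots> = res z (p x \<sqinter> (p y \<sqinter> p z))"
    unfolding circ_eq_res[of y] by (rule res_res) (simp_all add: inf.coboundedI2)
  also have "\<dots> = x \<odot> y \<odot> z"
    unfolding circ_eq_res[of "x \<odot> y"] p_circ by (simp add: inf_assoc)
  finally show "x \<odot> y \<odot> z = x \<odot> (y \<odot> z)" ..
  show "x \<odot> x = x" by (simp add: circ_eq_res)
qed

text \<open>Both sides are glued from \<open>y\<close> on \<open>p y\<close> and from \<open>z\<close> on the rest.\<close>

lemma res_bullet_bullet_outside:
  assumes d: "d \<le> p y \<squnion> p z" "d \<sqinter> p x = bot"
  shows "res (x \<bullet> y \<bullet> z) d = res (y \<bullet> z) d"
proof (rule eq_if_res_eq_on_cover)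
  let ?e1 = "d \<sqinter> p y" and ?e2 = "rdiff d (p y)"
  have cover: "d = ?e1 \<squnion> ?e2" by (simp only: inf_sup_rdiff[OF gba])
  have dL: "d \<le> p (x \<bullet> y \<bullet> z)" and dR: "d \<le> p (y \<bullet> z)"
    using d(1) by (simp_all add: p_bullet sup_assoc le_supI2)
  show "p (res (x \<bullet> y \<bullet> z) d) = ?e1 \<squnion> ?e2" "p (res (y \<bullet> z) d) = ?e1 \<squnion> ?e2"
    using dL dR cover by (simp_all add: p_res)
  have e1d: "?e1 \<le> d" and e2d: "?e2 \<le> d" by (simp_all add: rdiff_le[OF gba])
  have e1x: "?e1 \<sqinter> p x = bot" using disjoint_mono[OF e1d d(2)] .
  have e2y: "?e2 \<sqinter> p y = bot" by (rule rdiff_inf_eq_bot[OF gba])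
  have e2z: "?e2 \<le> p z" using disjoint_le_supD[OF order_trans[OF e2d d(1)] e2y] .
  have e2xy: "?e2 \<sqinter> p (x \<bullet> y) = bot"
    using disjoint_mono[OF e2d d(2)] e2y by (simp add: p_bullet inf_sup_distrib1)
  have "res (x \<bullet> y \<bullet> z) ?e1 = res (x \<bullet> y) ?e1"
    by (rule res_bullet_left) (auto simp: p_bullet intro: le_supI2)
  also have "\<dots> = res y ?e1" by (rule res_bullet_right[OF _ e1x]) simp
  also have "\<dots> = res (y \<bullet> z) ?e1" by (rule res_bullet_left[symmetric]) simp
  finally show "res (res (x \<bullet> y \<bullet> z) d) ?e1 = res (res (y \<bullet> z) d) ?e1"
    using res_res[OF e1d dL] res_res[OF e1d dR] by simp
  have "res (x \<bullet> y \<bullet> z) ?e2 = res z ?e2" by (rule res_bullet_right[OF e2z e2xy])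
  also have "\<dots> = res (y \<bullet> z) ?e2" by (rule res_bullet_right[symmetric, OF e2z e2y])
  finally show "res (res (x \<bullet> y \<bullet> z) d) ?e2 = res (res (y \<bullet> z) d) ?e2"
    using res_res[OF e2d dL] res_res[OF e2d dR] by simp
qed

lemma bullet_assoc: "x \<bullet> y \<bullet> z = x \<bullet> (y \<bullet> z)"
proof (rule sym, rule bullet_eqI)
  show "p (x \<bullet> y \<bullet> z) = p x \<squnion> p (y \<bullet> z)" by (simp add: p_bullet sup_assoc)
  show "res (x \<bullet> y \<bullet> z) (p x) = x"
    by (simp add: res_bullet_left p_bullet)
  show "res (x \<bullet> y \<bullet> z) (rdiff (p (y \<bullet> z)) (p x)) = res (y \<bullet> z) (rdiff (p (y \<bullet> z)) (p x))"
    by (rule res_bullet_bullet_outside)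
      (simp_all add: p_bullet rdiff_le[OF gba, THEN order_trans] rdiff_inf_eq_bot[OF gba])
qed

lemma band_bullet: "band (\<bullet>)"
  unfolding band_def by (simp add: bullet_assoc bullet_absorb)

lemma res_bullet_compatible:
  assumes "res x (p x \<sqinter> p y) = res y (p x \<sqinter> p y)"
  shows "res (x \<bullet> y) (p y) = y"
proof (rule eq_if_res_eq_on_cover)
  let ?e1 = "p y \<sqinter> p x" and ?e2 = "rdiff (p y) (p x)"
  have le: "p y \<le> p (x \<bullet> y)" by (simp add: p_bullet)
  show "p (res (x \<bullet> y) (p y)) = ?e1 \<squnion> ?e2" "p y = ?e1 \<squnion> ?e2"
    using le by (simp_all add: p_res inf_sup_rdiff[OF gba])
  have "res (x \<bullet> y) ?e1 = res x ?e1" by (rule res_bullet_left) simp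
  then show "res (res (x \<bullet> y) (p y)) ?e1 = res y ?e1"
    using assms res_res[OF _ le, of ?e1] by (simp add: inf_commute)
  show "res (res (x \<bullet> y) (p y)) ?e2 = res y ?e2"
    using res_res[OF rdiff_le[OF gba] le] res_bullet_rdiff by simp
qed

lemma bullet_commute_iff_circ_commute: "x \<bullet> y = y \<bullet> x \<longleftrightarrow> x \<odot> y = y \<odot> x"
proof
  assume comm: "x \<bullet> y = y \<bullet> x"
  have "x \<odot> y = res (y \<bullet> x) (p x \<sqinter> p y)" by (simp add: circ_eq_res res_bullet_left)
  also have "\<dots> = res x (p x \<sqinter> p y)" by (simp add: comm[symmetric] res_bullet_left)
  finally show "x \<odot> y = y \<odot> x" by (simp add: circ_eq_res inf_commute)
next
  assume "x \<odot> y = y \<odot> x"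
  then have compatible: "res x (p x \<sqinter> p y) = res y (p x \<sqinter> p y)"
    by (simp add: circ_eq_res inf_commute)
  show "x \<bullet> y = y \<bullet> x"
  proof (rule sym, rule bullet_eqI)
    show "p (x \<bullet> y) = p y \<squnion> p x" by (simp add: p_bullet sup_commute)
    show "res (x \<bullet> y) (p y) = y" by (rule res_bullet_compatible[OF compatible])
    show "res (x \<bullet> y) (rdiff (p x) (p y)) = res x (rdiff (p x) (p y))"
      by (rule res_bullet_left[OF rdiff_le[OF gba]])
  qed
qed

lemma corner_eq_res_image: "{x \<odot> s \<odot> x | s. True} = res x ` {e. e \<le> p x}"
proof -
  have corner: "x \<odot> s \<odot> x = res x (p x \<sqinter> p s)" for s
    unfolding circ_eq_res[of "x \<odot> s" x] p_circ by (simp add: inf_commute inf_left_commute)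
  have "\<exists>s. e = p x \<sqinter> p s" if "e \<le> p x" for e
    using that surj_p by (metis inf.absorb2 surjD)
  then show ?thesis
    unfolding corner by auto
qed

lemma circ_res_res: "e \<le> p x \<Longrightarrow> f \<le> p x \<Longrightarrow> res x e \<odot> res x f = res x (e \<sqinter> f)"
  by (simp add: circ_eq_res p_res res_res le_infI2)

lemma bullet_res_res: "e \<le> p x \<Longrightarrow> f \<le> p x \<Longrightarrow> res x e \<bullet> res x f = res x (e \<squnion> f)"
proof (rule bullet_eqI)
  assume e: "e \<le> p x" and f: "f \<le> p x"
  then have ef: "e \<squnion> f \<le> p x" by simp
  show "p (res x (e \<squnion> f)) = p (res x e) \<squnion> p (res x f)" using e f ef by (simp add: p_res)
  show "res (res x (e \<squnion> f)) (p (res x e)) = res x e" using e ef by (simp add: p_res res_res)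
  have "rdiff f e \<le> e \<squnion> f" using rdiff_le[OF gba] by (rule le_supI2)
  then show "res (res x (e \<squnion> f)) (rdiff (p (res x f)) (p (res x e)))
      = res (res x f) (rdiff (p (res x f)) (p (res x e)))"
    using e f ef rdiff_le[OF gba] by (simp add: p_res res_res)
qed

lemma boolean_algebra_on_corner: "boolean_algebra_on {x \<odot> s \<odot> x | s. True} (\<odot>) (\<bullet>)"
  unfolding corner_eq_res_image
proof (rule boolean_algebra_on_image_interval)
  show "\<exists>g\<le>p x. e \<sqinter> g = bot \<and> e \<squnion> g = p x" if "e \<le> p x" for e
    using that rdiff_le[OF gba] inf_rdiff_eq_bot[OF gba] sup_rdiff[OF gba, of e "p x"]
    by (metis sup.absorb2)
qed (simp_all add: circ_res_res bullet_res_res)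

lemma circ_bullet_left_absorb: "x \<odot> (x \<bullet> y) = x"
  by (simp add: circ_eq_res p_bullet res_bullet_left)

lemma circ_bullet_right_absorb: "(y \<bullet> x) \<odot> x = x"
  by (simp add: circ_eq_res p_bullet inf.absorb2)

lemma bullet_circ_left_absorb: "x \<bullet> (x \<odot> y) = x"
  by (rule bullet_absorb) (simp add: p_circ)

lemma bullet_circ_right_absorb: "(y \<odot> x) \<bullet> x = x"
  by (rule bullet_psle) (simp add: circ_eq_res res_psle)

lemma circ_right_regular: "x \<odot> y \<odot> x = y \<odot> x"
  by (simp add: circ_eq_res p_res ac_simps)

lemma bullet_left_regular: "x \<bullet> y \<bullet> x = x \<bullet> y"
  by (simp add: bullet_absorb p_bullet)

lemma ex_circ_zero: "\<exists>z. \<forall>x. z \<odot> x = z \<and> x \<odot> z = z"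
proof -
  obtain z where "p z = bot" using surj_p by (metis surjD)
  then have "z \<odot> x = z \<and> x \<odot> z = z" for x
    by (auto intro: eq_if_p_eq_bot simp: p_circ)
  then show ?thesis by blast
qed

end

theorem proposition2p5:
  fixes p :: "'x \<Rightarrow> 'b::{distrib_lattice,bounded_lattice_bot}"
    and res :: "'x \<Rightarrow> 'b \<Rightarrow> 'x"
  assumes "boolean_set p res"
  shows "rh_skew_boolean_algebra (bs_circ p res) (bs_bullet p res)"
proof -
  interpret boolean_presheaf p res by (rule boolean_presheaf.intro) (rule assms)
  show ?thesis
    unfolding rh_skew_boolean_algebra_def
    using band_circ band_bullet
      circ_bullet_left_absorb circ_bullet_right_absorb
      bullet_circ_left_absorb bullet_circ_right_absorb
      circ_right_regular bullet_left_regular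
      bullet_commute_iff_circ_commute ex_circ_zero boolean_algebra_on_corner
    by blast
qed

end
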